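(* Two spatial matrices of the same size $m\times n\times q$ over a field $k$ are equivalent if and only if their regular parts are equivalent.
   Context: An $m\times n\times q$ spatial matrix $\mathbb A=[a_{ijk}]$ has entries in $k$. Two spatial matrices are equivalent if $a'_{i'j'k'}=\sum_{i,j,k}a_{ijk}r_{ii'}s_{jj'}t_{kk'}$ for nonsingular matrices $R=[r_{ii'}]$ ($m\times m$), $S=[s_{jj'}]$ ($n\times n$), $T=[t_{kk'}]$ ($q\times q$). Let $r_1$ be the dimension of the span of the matrices $[a_{ijk}]_{j,k}$ ($i=1,\dots,m$), $r_2$ that of $[a_{ijk}]_{i,k}$ ($j=1,\dots,n$), $r_3$ that of $[a_{ijk}]_{i,j}$ ($k=1,\dots,q$); $\mathrm{rank}\,\mathbb A=(r_1,r_2,r_3)$. $\mathbb A$ is regular if $\mathrm{rank}\,\mathbb A=(m,n,q)$. A regular part of $\mathbb A$ is a regular $r_1\times r_2\times r_3$ spatial matrix $\mathbb A'$ such that $\mathbb A$ is equivalent to $\mathbb A'\oplus\mathbb O$, where $\mathbb O$ is the zero $(m-r_1)\times(n-r_2)\times(q-r_3)$ spatial matrix and $\oplus$ denotes the block-diagonal spatial matrix (entries outside the two diagonal blocks are zero). *)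

theory Defs
  imports "HOL.Vector_Spaces" "HOL-Library.Function_Algebras" "Jordan_Normal_Form.Matrix"
begin

text \<open>An m x n x q spatial matrix over a field 'a is represented by a function
  nat => nat => nat => 'a; only the entries with indices i<m, j<n, k<q matter.\<close>
type_synonym 'a smat = "nat \<Rightarrow> nat \<Rightarrow> nat \<Rightarrow> 'a"

definition mscale :: "'a::field \<Rightarrow> (nat \<Rightarrow> nat \<Rightarrow> 'a) \<Rightarrow> (nat \<Rightarrow> nat \<Rightarrow> 'a)" where
  "mscale c M = (\<lambda>j k. c * M j k)"

definition span_dim :: "(nat \<Rightarrow> nat \<Rightarrow> 'a::field) set \<Rightarrow> nat" where
  "span_dim S = vector_space.dim mscale S"

definition slices1 :: "nat \<Rightarrow> nat \<Rightarrow> nat \<Rightarrow> 'a::field smat \<Rightarrow> (nat \<Rightarrow> nat \<Rightarrow> 'a) set" where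
  "slices1 m n q A = (\<lambda>i. \<lambda>j k. if j < n \<and> k < q then A i j k else 0) ` {..<m}"
definition slices2 :: "nat \<Rightarrow> nat \<Rightarrow> nat \<Rightarrow> 'a::field smat \<Rightarrow> (nat \<Rightarrow> nat \<Rightarrow> 'a) set" where
  "slices2 m n q A = (\<lambda>j. \<lambda>i k. if i < m \<and> k < q then A i j k else 0) ` {..<n}"
definition slices3 :: "nat \<Rightarrow> nat \<Rightarrow> nat \<Rightarrow> 'a::field smat \<Rightarrow> (nat \<Rightarrow> nat \<Rightarrow> 'a) set" where
  "slices3 m n q A = (\<lambda>k. \<lambda>i j. if i < m \<and> j < n then A i j k else 0) ` {..<q}"

definition srank :: "nat \<Rightarrow> nat \<Rightarrow> nat \<Rightarrow> 'a::field smat \<Rightarrow> nat \<times> nat \<times> nat" where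
  "srank m n q A = (span_dim (slices1 m n q A), span_dim (slices2 m n q A), span_dim (slices3 m n q A))"

definition sregular :: "nat \<Rightarrow> nat \<Rightarrow> nat \<Rightarrow> 'a::field smat \<Rightarrow> bool" where
  "sregular m n q A \<longleftrightarrow> srank m n q A = (m, n, q)"

definition sequiv :: "nat \<Rightarrow> nat \<Rightarrow> nat \<Rightarrow> 'a::field smat \<Rightarrow> 'a smat \<Rightarrow> bool" where
  "sequiv m n q A B \<longleftrightarrow>
     (\<exists>R S T. R \<in> carrier_mat m m \<and> invertible_mat R \<and>
              S \<in> carrier_mat n n \<and> invertible_mat S \<and>
              T \<in> carrier_mat q q \<and> invertible_mat T \<and>
              (\<forall>i'<m. \<forall>j'<n. \<forall>k'<q.
                 B i' j' k' = (\<Sum>i<m. \<Sum>j<n. \<Sum>k<q. A i j k * R $$ (i, i') * S $$ (j, j') * T $$ (k, k'))))"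

definition sdsum_zero :: "nat \<Rightarrow> nat \<Rightarrow> nat \<Rightarrow> 'a::field smat \<Rightarrow> 'a smat" where
  "sdsum_zero r1 r2 r3 A' = (\<lambda>i j k. if i < r1 \<and> j < r2 \<and> k < r3 then A' i j k else 0)"

definition regular_part :: "nat \<Rightarrow> nat \<Rightarrow> nat \<Rightarrow> 'a::field smat \<Rightarrow> nat \<Rightarrow> nat \<Rightarrow> nat \<Rightarrow> 'a smat \<Rightarrow> bool" where
  "regular_part m n q A r1 r2 r3 A' \<longleftrightarrow>
     srank m n q A = (r1, r2, r3) \<and> sregular r1 r2 r3 A' \<and>
     sequiv m n q A (sdsum_zero r1 r2 r3 A')"

end

theory Submission
  imports Defs "Jordan_Normal_Form.Determinant"
begin

(* Equivalence preserves the rank triple: each mode product can only shrink the span of the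
   slices, and it is undone by the mode product with the inverse matrix.

   For the nontrivial direction, let A' (+) O and B' (+) O be equivalent via (R, S, T), both of
   rank (r1, r2, r3). After applying S and T, the first r1 slices of A' (+) O are still linearly
   independent (the span has dimension r1), while the slices of B' (+) O beyond r1 vanish; hence
   R has a zero upper-right block, and since det R = det R11 * det R22 its upper-left r1 x r1
   block R11 is invertible. Cyclically permuting the indices gives the same for S and T, and the
   three upper-left blocks transform A' into B'. Conversely, an equivalence of A' and B' extends
   to one of A' (+) O and B' (+) O by identity blocks. *)

subsection \<open>Invertible matrices and their blocks\<close>

lemma invertible_mat_iff_det:
  fixes A :: "'a::field mat"
  assumes A: "A \<in> carrier_mat n n"
  shows "invertible_mat A \<longleftrightarrow> det A \<noteq> 0"
proof
  assume "invertible_mat A"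
  then obtain B where AB: "A * B = 1\<^sub>m n" and BA: "B * A = 1\<^sub>m (dim_row B)"
    using A unfolding invertible_mat_def inverts_mat_def by auto
  have "B \<in> carrier_mat n n"
    using arg_cong[OF AB, of dim_col] arg_cong[OF BA, of dim_col] A by auto
  then show "det A \<noteq> 0"
    using arg_cong[OF AB, of det] det_mult[OF A] by auto
next
  assume "det A \<noteq> 0"
  then have "A \<in> Units (ring_mat TYPE('a) n ())"
    by (rule det_non_zero_imp_unit[OF A])
  then show "invertible_mat A"
    using A by (auto simp: Units_def ring_mat_def invertible_mat_def inverts_mat_def)
qed

lemma invertible_mat_mult:
  fixes A B :: "'a::field mat"
  assumes "A \<in> carrier_mat n n" "B \<in> carrier_mat n n" "invertible_mat A" "invertible_mat B"
  shows "invertible_mat (A * B)"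
  using assms by (simp add: invertible_mat_iff_det[of _ n] det_mult[of A n B])

lemma invertible_mat_one: "invertible_mat (1\<^sub>m n :: 'a::field mat)"
  by (simp add: invertible_mat_iff_det[of _ n])

lemma obtain_inverse_mat:
  fixes A :: "'a::field mat"
  assumes A: "A \<in> carrier_mat n n" and "invertible_mat A"
  obtains B where "B \<in> carrier_mat n n" "invertible_mat B" "A * B = 1\<^sub>m n"
proof -
  obtain B where AB: "A * B = 1\<^sub>m n" and BA: "B * A = 1\<^sub>m (dim_row B)"
    using assms unfolding invertible_mat_def inverts_mat_def by auto
  have B: "B \<in> carrier_mat n n"
    using arg_cong[OF AB, of dim_col] arg_cong[OF BA, of dim_col] A by auto
  have "det B \<noteq> 0"
    using arg_cong[OF AB, of det] det_mult[OF A B] by auto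
  with B AB that show ?thesis by (simp add: invertible_mat_iff_det[of _ n])
qed

definition upper_left_block :: "nat \<Rightarrow> 'a mat \<Rightarrow> 'a mat" where
  "upper_left_block r A = mat r r (\<lambda>(i, j). A $$ (i, j))"

definition zero_upper_right_block :: "nat \<Rightarrow> nat \<Rightarrow> 'a::zero mat \<Rightarrow> bool" where
  "zero_upper_right_block r n A \<longleftrightarrow> (\<forall>i<r. \<forall>j. r \<le> j \<longrightarrow> j < n \<longrightarrow> A $$ (i, j) = 0)"

lemma invertible_upper_left_block:
  fixes A :: "'a::field mat"
  assumes A: "A \<in> carrier_mat n n" "invertible_mat A"
    and r: "r \<le> n" and zero: "zero_upper_right_block r n A"
  shows "invertible_mat (upper_left_block r A)"
proof -
  define A3 where "A3 = mat (n - r) r (\<lambda>(i, j). A $$ (i + r, j))"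
  define A4 where "A4 = mat (n - r) (n - r) (\<lambda>(i, j). A $$ (i + r, j + r))"
  have "A = four_block_mat (upper_left_block r A) (0\<^sub>m r (n - r)) A3 A4"
    using A(1) r zero unfolding upper_left_block_def A3_def A4_def zero_upper_right_block_def
    by (intro eq_matI) auto
  also have "det \<dots> = det (upper_left_block r A) * det A4"
    by (rule det_four_block_mat_upper_right_zero) (auto simp: A3_def A4_def upper_left_block_def)
  finally have "det A = det (upper_left_block r A) * det A4" .
  with A show ?thesis
    by (simp add: invertible_mat_iff_det[of _ r] invertible_mat_iff_det[of _ n] upper_left_block_def)
qed

definition extend_with_identity :: "nat \<Rightarrow> 'a::zero_neq_one mat \<Rightarrow> 'a mat" where
  "extend_with_identity n A = four_block_mat A (0\<^sub>m (dim_row A) (n - dim_row A))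
     (0\<^sub>m (n - dim_row A) (dim_row A)) (1\<^sub>m (n - dim_row A))"

lemma extend_with_identity_carrier:
  "A \<in> carrier_mat r r \<Longrightarrow> r \<le> n \<Longrightarrow> extend_with_identity n A \<in> carrier_mat n n"
  unfolding extend_with_identity_def carrier_mat_def by auto

lemma index_extend_with_identity:
  "A \<in> carrier_mat r r \<Longrightarrow> r \<le> n \<Longrightarrow> i < r \<Longrightarrow> j < n \<Longrightarrow>
    extend_with_identity n A $$ (i, j) = (if j < r then A $$ (i, j) else 0)"
  unfolding extend_with_identity_def carrier_mat_def by auto

lemma invertible_extend_with_identity:
  fixes A :: "'a::field mat"
  assumes A: "A \<in> carrier_mat r r" "invertible_mat A" and r: "r \<le> n"
  shows "invertible_mat (extend_with_identity n A)"
proof -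
  have "det (extend_with_identity n A) = det A"
    using A(1) unfolding extend_with_identity_def
    by (subst det_four_block_mat_upper_right_zero[of _ r _ "n - r"]) auto
  then show ?thesis
    using A r by (simp add: invertible_mat_iff_det[of _ r] invertible_mat_iff_det[OF extend_with_identity_carrier])
qed

subsection \<open>Mode products and equivalence\<close>

definition mode1_prod :: "nat \<Rightarrow> 'a::field smat \<Rightarrow> 'a mat \<Rightarrow> 'a smat" where
  "mode1_prod m A R = (\<lambda>i' j k. \<Sum>i<m. R $$ (i, i') * A i j k)"
definition mode2_prod :: "nat \<Rightarrow> 'a::field smat \<Rightarrow> 'a mat \<Rightarrow> 'a smat" where
  "mode2_prod n A S = (\<lambda>i j' k. \<Sum>j<n. S $$ (j, j') * A i j k)"
definition mode3_prod :: "nat \<Rightarrow> 'a::field smat \<Rightarrow> 'a mat \<Rightarrow> 'a smat" where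
  "mode3_prod q A T = (\<lambda>i j k'. \<Sum>k<q. T $$ (k, k') * A i j k)"

definition smat_transform ::
    "nat \<Rightarrow> nat \<Rightarrow> nat \<Rightarrow> 'a::field smat \<Rightarrow> 'a mat \<Rightarrow> 'a mat \<Rightarrow> 'a mat \<Rightarrow> 'a smat" where
  "smat_transform m n q A R S T = mode1_prod m (mode2_prod n (mode3_prod q A T) S) R"

definition box_eq :: "nat \<Rightarrow> nat \<Rightarrow> nat \<Rightarrow> 'a smat \<Rightarrow> 'a smat \<Rightarrow> bool" where
  "box_eq m n q A B \<longleftrightarrow> (\<forall>i<m. \<forall>j<n. \<forall>k<q. A i j k = B i j k)"

lemma box_eq_sym: "box_eq m n q A B \<Longrightarrow> box_eq m n q B A"
  and box_eq_trans: "box_eq m n q A B \<Longrightarrow> box_eq m n q B C \<Longrightarrow> box_eq m n q A C"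
  by (simp_all add: box_eq_def)

lemma smat_transform_apply:
  "smat_transform m n q A R S T i' j' k' =
     (\<Sum>i<m. \<Sum>j<n. \<Sum>k<q. A i j k * R $$ (i, i') * S $$ (j, j') * T $$ (k, k'))"
  by (simp add: smat_transform_def mode1_prod_def mode2_prod_def mode3_prod_def sum_distrib_left mult_ac)

lemma sequiv_iff_box_eq: "sequiv m n q A B \<longleftrightarrow>
     (\<exists>R S T. R \<in> carrier_mat m m \<and> invertible_mat R \<and>
              S \<in> carrier_mat n n \<and> invertible_mat S \<and>
              T \<in> carrier_mat q q \<and> invertible_mat T \<and>
              box_eq m n q B (smat_transform m n q A R S T))"
  unfolding sequiv_def box_eq_def smat_transform_apply ..

lemma mode1_prod_cong: "box_eq m n q A B \<Longrightarrow> box_eq m' n q (mode1_prod m A R) (mode1_prod m B R)"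
  and mode2_prod_cong: "box_eq m n q A B \<Longrightarrow> box_eq m n' q (mode2_prod n A S) (mode2_prod n B S)"
  and mode3_prod_cong: "box_eq m n q A B \<Longrightarrow> box_eq m n q' (mode3_prod q A T) (mode3_prod q B T)"
  by (simp_all add: box_eq_def mode1_prod_def mode2_prod_def mode3_prod_def)

lemma mode1_mode2_prod_commute: "mode1_prod m (mode2_prod n A S) R = mode2_prod n (mode1_prod m A R) S"
  and mode1_mode3_prod_commute: "mode1_prod m (mode3_prod q A T) R = mode3_prod q (mode1_prod m A R) T"
  and mode2_mode3_prod_commute: "mode2_prod n (mode3_prod q A T) S = mode3_prod q (mode2_prod n A S) T"
  unfolding mode1_prod_def mode2_prod_def mode3_prod_def
  by (auto simp: fun_eq_iff sum_distrib_left mult_ac intro: sum.swap)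

lemma mode1_prod_mult: "R1 \<in> carrier_mat m m \<Longrightarrow> R2 \<in> carrier_mat m m \<Longrightarrow>
    box_eq m n q (mode1_prod m (mode1_prod m A R1) R2) (mode1_prod m A (R1 * R2))"
  and mode2_prod_mult: "S1 \<in> carrier_mat n n \<Longrightarrow> S2 \<in> carrier_mat n n \<Longrightarrow>
    box_eq m n q (mode2_prod n (mode2_prod n A S1) S2) (mode2_prod n A (S1 * S2))"
  and mode3_prod_mult: "T1 \<in> carrier_mat q q \<Longrightarrow> T2 \<in> carrier_mat q q \<Longrightarrow>
    box_eq m n q (mode3_prod q (mode3_prod q A T1) T2) (mode3_prod q A (T1 * T2))"
  unfolding box_eq_def mode1_prod_def mode2_prod_def mode3_prod_def
  by (auto simp: scalar_prod_def sum_distrib_left sum_distrib_right mult_ac atLeast0LessThan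
      intro: sum.swap)

lemma mode1_prod_one: "box_eq m n q (mode1_prod m A (1\<^sub>m m)) A"
  and mode2_prod_one: "box_eq m n q (mode2_prod n A (1\<^sub>m n)) A"
  and mode3_prod_one: "box_eq m n q (mode3_prod q A (1\<^sub>m q)) A"
  unfolding box_eq_def mode1_prod_def mode2_prod_def mode3_prod_def
  by (auto simp: if_distrib[of "\<lambda>x. x * _"] cong: if_cong)

lemma smat_transform_cong:
  "box_eq m n q A B \<Longrightarrow> box_eq m n q (smat_transform m n q A R S T) (smat_transform m n q B R S T)"
  unfolding smat_transform_def by (intro mode1_prod_cong mode2_prod_cong mode3_prod_cong)

lemma smat_transform_mult:
  assumes "R1 \<in> carrier_mat m m" "R2 \<in> carrier_mat m m" "S1 \<in> carrier_mat n n" "S2 \<in> carrier_mat n n"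
    "T1 \<in> carrier_mat q q" "T2 \<in> carrier_mat q q"
  shows "box_eq m n q (smat_transform m n q (smat_transform m n q A R1 S1 T1) R2 S2 T2)
                      (smat_transform m n q A (R1 * R2) (S1 * S2) (T1 * T2))"
proof -
  have "smat_transform m n q (smat_transform m n q A R1 S1 T1) R2 S2 T2 =
      mode1_prod m (mode1_prod m (mode2_prod n (mode2_prod n (mode3_prod q (mode3_prod q A T1) T2) S1) S2) R1) R2"
    by (simp only: smat_transform_def mode1_mode2_prod_commute[symmetric]
        mode1_mode3_prod_commute[symmetric] mode2_mode3_prod_commute[symmetric])
  then show ?thesis
    unfolding smat_transform_def
    using assms by (metis box_eq_trans mode1_prod_mult mode1_prod_cong mode2_prod_mult
        mode2_prod_cong mode3_prod_mult)
qed

lemma smat_transform_one: "box_eq m n q (smat_transform m n q A (1\<^sub>m m) (1\<^sub>m n) (1\<^sub>m q)) A"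
  unfolding smat_transform_def
  by (meson box_eq_trans mode1_prod_one mode2_prod_one mode3_prod_one mode1_prod_cong mode2_prod_cong)

lemma sequiv_trans:
  assumes "sequiv m n q A B" "sequiv m n q B C"
  shows "sequiv m n q A C"
proof -
  obtain R1 S1 T1 where RST1: "R1 \<in> carrier_mat m m" "invertible_mat R1" "S1 \<in> carrier_mat n n"
      "invertible_mat S1" "T1 \<in> carrier_mat q q" "invertible_mat T1"
    and B: "box_eq m n q B (smat_transform m n q A R1 S1 T1)"
    using assms(1) unfolding sequiv_iff_box_eq by blast
  obtain R2 S2 T2 where RST2: "R2 \<in> carrier_mat m m" "invertible_mat R2" "S2 \<in> carrier_mat n n"
      "invertible_mat S2" "T2 \<in> carrier_mat q q" "invertible_mat T2"
    and C: "box_eq m n q C (smat_transform m n q B R2 S2 T2)"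
    using assms(2) unfolding sequiv_iff_box_eq by blast
  have "box_eq m n q C (smat_transform m n q A (R1 * R2) (S1 * S2) (T1 * T2))"
    using box_eq_trans[OF C smat_transform_cong[OF B]] smat_transform_mult RST1 RST2
    by (meson box_eq_trans)
  moreover have "invertible_mat (R1 * R2)" "invertible_mat (S1 * S2)" "invertible_mat (T1 * T2)"
    using RST1 RST2 by (auto intro: invertible_mat_mult)
  ultimately show ?thesis
    unfolding sequiv_iff_box_eq using RST1 RST2 by (meson mult_carrier_mat)
qed

lemma sequiv_sym:
  assumes "sequiv m n q A B"
  shows "sequiv m n q B A"
proof -
  obtain R S T where RST: "R \<in> carrier_mat m m" "invertible_mat R" "S \<in> carrier_mat n n"
      "invertible_mat S" "T \<in> carrier_mat q q" "invertible_mat T"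
    and B: "box_eq m n q B (smat_transform m n q A R S T)"
    using assms unfolding sequiv_iff_box_eq by blast
  obtain R' where R': "R' \<in> carrier_mat m m" "invertible_mat R'" "R * R' = 1\<^sub>m m"
    using obtain_inverse_mat[OF RST(1,2)] .
  obtain S' where S': "S' \<in> carrier_mat n n" "invertible_mat S'" "S * S' = 1\<^sub>m n"
    using obtain_inverse_mat[OF RST(3,4)] .
  obtain T' where T': "T' \<in> carrier_mat q q" "invertible_mat T'" "T * T' = 1\<^sub>m q"
    using obtain_inverse_mat[OF RST(5,6)] .
  have "box_eq m n q (smat_transform m n q B R' S' T')
      (smat_transform m n q A (R * R') (S * S') (T * T'))"
    using box_eq_trans[OF smat_transform_cong[OF B]]
      smat_transform_mult[OF RST(1) R'(1) RST(3) S'(1) RST(5) T'(1)] .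
  then have "box_eq m n q (smat_transform m n q B R' S' T') A"
    unfolding R'(3) S'(3) T'(3) using box_eq_trans smat_transform_one by blast
  then show ?thesis
    unfolding sequiv_iff_box_eq using R' S' T' box_eq_sym by blast
qed

subsection \<open>Slice spaces and invariance of the rank\<close>

interpretation ms: vector_space "mscale :: 'a::field \<Rightarrow> (nat \<Rightarrow> nat \<Rightarrow> 'a) \<Rightarrow> _"
  by unfold_locales (auto simp: mscale_def fun_eq_iff algebra_simps)

lemma span_dim_eq_dim: "span_dim S = ms.dim S"
  unfolding span_dim_def ..

lemma sum_fun_apply: "(\<Sum>i\<in>I. f i) x = (\<Sum>i\<in>I. f i x)"
  by (induction I rule: infinite_finite_induct) auto

lemma ms_dim_le_if_subset_span:
  assumes "finite W" "V \<subseteq> ms.span W"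
  shows "ms.dim V \<le> ms.dim W"
proof -
  obtain B where B: "B \<subseteq> W" "W \<subseteq> ms.span B" "card B = ms.dim W"
    by (rule ms.basis_exists[of W])
  have "V \<subseteq> ms.span B"
    using assms(2) B(2) ms.span_mono ms.span_span by blast
  moreover have "finite B"
    using B(1) assms(1) finite_subset by blast
  ultimately show ?thesis
    using ms.dim_le_card[of V B] B(3) by simp
qed

lemma ms_dim_image_le:
  fixes g :: "(nat \<Rightarrow> nat \<Rightarrow> 'a::field) \<Rightarrow> (nat \<Rightarrow> nat \<Rightarrow> 'a)"
  assumes "\<And>x y. g (x + y) = g x + g y" "\<And>c x. g (mscale c x) = mscale c (g x)"
    and "finite X"
  shows "ms.dim (g ` X) \<le> ms.dim X"
proof -
  interpret g: module_hom "mscale :: 'a \<Rightarrow> _" mscale g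
    by (rule module_hom.intro[OF ms.module_axioms ms.module_axioms])
      (rule module_hom_axioms.intro; fact)
  obtain B where B: "B \<subseteq> X" "X \<subseteq> ms.span B" "card B = ms.dim X"
    by (rule ms.basis_exists[of X])
  have "finite B"
    using B(1) assms(3) finite_subset by blast
  moreover have "g ` X \<subseteq> ms.span (g ` B)"
    using g.span_image[of B] B(2) by blast
  ultimately have "ms.dim (g ` X) \<le> card (g ` B)"
    using ms.dim_le_card by blast
  also have "\<dots> \<le> card B"
    using card_image_le \<open>finite B\<close> by blast
  finally show ?thesis
    using B(3) by simp
qed

lemma ms_independent_if_dim_eq_card:
  assumes "finite V" "ms.dim V = card V"
  shows "ms.independent V"
proof -
  obtain B where "B \<subseteq> V" "ms.independent B" "card B = ms.dim V"
    by (rule ms.basis_exists[of V])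
  then show ?thesis
    using card_subset_eq[OF assms(1)] assms(2) by metis
qed

lemma ms_independent_family_coeff_zero:
  assumes "finite I" "inj_on v I" "ms.independent (v ` I)"
    and "(\<Sum>i\<in>I. mscale (c i) (v i)) = 0" "i \<in> I"
  shows "c i = 0"
proof -
  let ?c = "\<lambda>w. c (the_inv_into I v w)"
  have "(\<Sum>w\<in>v ` I. mscale (?c w) w) = 0"
    using assms(4) by (simp add: sum.reindex[OF assms(2)] the_inv_into_f_f[OF assms(2)])
  then have "?c (v i) = 0"
    using iffD1[OF ms.independent_explicit_finite_subsets assms(3), rule_format, of "v ` I" ?c]
      assms(1,5) by simp
  then show ?thesis
    by (simp add: the_inv_into_f_f[OF assms(2,5)])
qed

definition transpose_fun :: "(nat \<Rightarrow> nat \<Rightarrow> 'a) \<Rightarrow> (nat \<Rightarrow> nat \<Rightarrow> 'a)" where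
  "transpose_fun M = (\<lambda>a b. M b a)"

lemma ms_dim_transpose_image:
  fixes X :: "(nat \<Rightarrow> nat \<Rightarrow> 'a::field) set"
  assumes "finite X"
  shows "ms.dim (transpose_fun ` X) = ms.dim X"
proof -
  have lin: "transpose_fun (x + y) = transpose_fun x + transpose_fun y"
    "transpose_fun (mscale c x) = mscale c (transpose_fun x)" for c and x y :: "nat \<Rightarrow> nat \<Rightarrow> 'a"
    by (auto simp: transpose_fun_def mscale_def fun_eq_iff)
  have "transpose_fun ` transpose_fun ` X = X"
    by (auto simp: transpose_fun_def image_image)
  then show ?thesis
    using ms_dim_image_le[OF lin assms] ms_dim_image_le[OF lin finite_imageI[OF assms]]
    by (metis le_antisym)
qed

lemma finite_slices1: "finite (slices1 m n q A)"
  unfolding slices1_def by simp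

lemma slices1_box_eq: "box_eq m n q A B \<Longrightarrow> slices1 m n q A = slices1 m n q B"
  unfolding slices1_def box_eq_def by (auto intro!: image_cong simp: fun_eq_iff)

lemma slice1_mode1_prod:
  "(\<lambda>j k. if j < n \<and> k < q then mode1_prod m A R i' j k else 0) =
   (\<Sum>i<m. mscale (R $$ (i, i')) (\<lambda>j k. if j < n \<and> k < q then A i j k else 0))"
  by (auto simp: fun_eq_iff sum_fun_apply mscale_def mode1_prod_def)

lemma dim_slices1_mode1_prod_le:
  "ms.dim (slices1 m n q (mode1_prod m A R)) \<le> ms.dim (slices1 m n q A)"
proof (rule ms_dim_le_if_subset_span[OF finite_slices1], rule subsetI)
  fix x
  assume "x \<in> slices1 m n q (mode1_prod m A R)"
  then obtain i' where x: "x = (\<lambda>j k. if j < n \<and> k < q then mode1_prod m A R i' j k else 0)"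
    unfolding slices1_def by auto
  show "x \<in> ms.span (slices1 m n q A)"
    unfolding x slice1_mode1_prod
    by (intro ms.span_sum ms.span_scale ms.span_base) (auto simp: slices1_def)
qed

lemma dim_slices1_mode2_prod_le:
  "ms.dim (slices1 m n q (mode2_prod n A S)) \<le> ms.dim (slices1 m n q A)"
proof -
  define g where "g M = (\<lambda>j' k. if j' < n \<and> k < q then \<Sum>j<n. S $$ (j, j') * M j k else 0)"
    for M :: "nat \<Rightarrow> nat \<Rightarrow> 'a"
  have lin: "g (x + y) = g x + g y" "g (mscale c x) = mscale c (g x)" for c x y
    by (auto simp: g_def mscale_def fun_eq_iff sum.distrib sum_distrib_left algebra_simps)
  have "slices1 m n q (mode2_prod n A S) = g ` slices1 m n q A"
    unfolding slices1_def image_image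
    by (intro image_cong refl) (auto simp: g_def mode2_prod_def fun_eq_iff intro!: sum.cong)
  then show ?thesis
    using ms_dim_image_le[OF lin finite_slices1] by simp
qed

lemma dim_slices1_mode3_prod_le:
  "ms.dim (slices1 m n q (mode3_prod q A T)) \<le> ms.dim (slices1 m n q A)"
proof -
  define g where "g M = (\<lambda>j k'. if j < n \<and> k' < q then \<Sum>k<q. T $$ (k, k') * M j k else 0)"
    for M :: "nat \<Rightarrow> nat \<Rightarrow> 'a"
  have lin: "g (x + y) = g x + g y" "g (mscale c x) = mscale c (g x)" for c x y
    by (auto simp: g_def mscale_def fun_eq_iff sum.distrib sum_distrib_left algebra_simps)
  have "slices1 m n q (mode3_prod q A T) = g ` slices1 m n q A"
    unfolding slices1_def image_image
    by (intro image_cong refl) (auto simp: g_def mode3_prod_def fun_eq_iff intro!: sum.cong)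
  then show ?thesis
    using ms_dim_image_le[OF lin finite_slices1] by simp
qed

text \<open>The other two slice families of \<open>A\<close> are (up to
  transposition) the first slice family of its rotations, so everything proved for the first mode
  transfers to the other two.\<close>
definition rotate_smat :: "'a smat \<Rightarrow> 'a smat" where
  "rotate_smat A = (\<lambda>j k i. A i j k)"

lemma rotate_smat_mode1_prod: "rotate_smat (mode1_prod m A R) = mode3_prod m (rotate_smat A) R"
  and rotate_smat_mode2_prod: "rotate_smat (mode2_prod n A S) = mode1_prod n (rotate_smat A) S"
  and rotate_smat_mode3_prod: "rotate_smat (mode3_prod q A T) = mode2_prod q (rotate_smat A) T"
  by (simp_all add: rotate_smat_def mode1_prod_def mode2_prod_def mode3_prod_def fun_eq_iff)

lemma rotate_smat_transform:
  "rotate_smat (smat_transform m n q A R S T) = smat_transform n q m (rotate_smat A) S T R"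
  by (simp only: smat_transform_def rotate_smat_mode1_prod rotate_smat_mode2_prod
      rotate_smat_mode3_prod mode1_mode2_prod_commute[symmetric]
      mode1_mode3_prod_commute[symmetric] mode2_mode3_prod_commute[symmetric])

lemma box_eq_rotate_smat: "box_eq m n q A B \<Longrightarrow> box_eq n q m (rotate_smat A) (rotate_smat B)"
  by (simp add: box_eq_def rotate_smat_def)

lemma rotate_smat_rotate_smat_rotate_smat [simp]: "rotate_smat (rotate_smat (rotate_smat A)) = A"
  by (simp add: rotate_smat_def)

lemma slices2_eq_slices1_rotate: "slices2 m n q A = transpose_fun ` slices1 n q m (rotate_smat A)"
  unfolding slices1_def slices2_def image_image transpose_fun_def rotate_smat_def
  by (auto intro!: image_cong simp: fun_eq_iff)

lemma slices3_eq_slices1_rotate: "slices3 m n q A = slices1 q m n (rotate_smat (rotate_smat A))"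
  unfolding slices1_def slices3_def rotate_smat_def by auto

lemma srank_rotate_smat: "srank n q m (rotate_smat A) = (case srank m n q A of (a, b, c) \<Rightarrow> (b, c, a))"
  unfolding srank_def span_dim_eq_dim slices2_eq_slices1_rotate slices3_eq_slices1_rotate
    ms_dim_transpose_image[OF finite_slices1]
  by simp

lemma dim_slices1_smat_transform_le:
  "ms.dim (slices1 m n q (smat_transform m n q A R S T)) \<le> ms.dim (slices1 m n q A)"
  unfolding smat_transform_def
  by (rule order_trans[OF dim_slices1_mode1_prod_le
        order_trans[OF dim_slices1_mode2_prod_le dim_slices1_mode3_prod_le]])

lemma span_dim_slices1_sequiv:
  assumes "sequiv m n q A B"
  shows "span_dim (slices1 m n q A) = span_dim (slices1 m n q B)"
proof -
  have le: "span_dim (slices1 m n q Y) \<le> span_dim (slices1 m n q X)" if XY: "sequiv m n q X Y" for X Y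
  proof -
    obtain R S T where "box_eq m n q Y (smat_transform m n q X R S T)"
      using XY unfolding sequiv_iff_box_eq by blast
    then have "slices1 m n q Y = slices1 m n q (smat_transform m n q X R S T)"
      by (rule slices1_box_eq)
    then show ?thesis
      unfolding span_dim_eq_dim using dim_slices1_smat_transform_le by simp
  qed
  show ?thesis
    using le[OF assms] le[OF sequiv_sym[OF assms]] by simp
qed

lemma sequiv_rotate_smat:
  assumes "sequiv m n q A B"
  shows "sequiv n q m (rotate_smat A) (rotate_smat B)"
proof -
  obtain R S T where RST: "R \<in> carrier_mat m m" "invertible_mat R" "S \<in> carrier_mat n n"
      "invertible_mat S" "T \<in> carrier_mat q q" "invertible_mat T"
    and B: "box_eq m n q B (smat_transform m n q A R S T)"
    using assms unfolding sequiv_iff_box_eq by blast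
  have "box_eq n q m (rotate_smat B) (smat_transform n q m (rotate_smat A) S T R)"
    using box_eq_rotate_smat[OF B] unfolding rotate_smat_transform .
  then show ?thesis
    unfolding sequiv_iff_box_eq using RST by blast
qed

lemma srank_sequiv:
  assumes "sequiv m n q A B"
  shows "srank m n q A = srank m n q B"
proof -
  have slices2: "span_dim (slices2 m n q X) = span_dim (slices1 n q m (rotate_smat X))" for X :: "'a smat"
    unfolding slices2_eq_slices1_rotate span_dim_eq_dim ms_dim_transpose_image[OF finite_slices1] ..
  have rot: "sequiv n q m (rotate_smat A) (rotate_smat B)"
    by (rule sequiv_rotate_smat[OF assms])
  have rot2: "sequiv q m n (rotate_smat (rotate_smat A)) (rotate_smat (rotate_smat B))"
    by (rule sequiv_rotate_smat[OF rot])
  show ?thesis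
    unfolding srank_def slices3_eq_slices1_rotate slices2
    using span_dim_slices1_sequiv[OF assms] span_dim_slices1_sequiv[OF rot]
      span_dim_slices1_sequiv[OF rot2] by simp
qed

subsection \<open>Equivalences between block-diagonal sums with zero\<close>

lemma mode1_prod_zero_upper_right_block:
  fixes C :: "'a::field smat"
  assumes r: "r \<le> m"
    and C0: "\<And>i j k. r \<le> i \<Longrightarrow> i < m \<Longrightarrow> j < n \<Longrightarrow> k < q \<Longrightarrow> C i j k = 0"
    and dim: "span_dim (slices1 m n q C) = r"
    and CR0: "\<And>i j k. r \<le> i \<Longrightarrow> i < m \<Longrightarrow> j < n \<Longrightarrow> k < q \<Longrightarrow>
      mode1_prod m C R i j k = 0"
  shows "zero_upper_right_block r m R"
proof -
  define v where "v i = (\<lambda>j k. if j < n \<and> k < q then C i j k else 0)" for i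
  have v0: "v i = 0" if "r \<le> i" "i < m" for i
    using C0 that by (auto simp: v_def fun_eq_iff)
  have span: "slices1 m n q C \<subseteq> ms.span (v ` {..<r})"
  proof
    fix x
    assume "x \<in> slices1 m n q C"
    then obtain i where "i < m" "x = v i"
      unfolding slices1_def v_def by auto
    then show "x \<in> ms.span (v ` {..<r})"
      by (cases "i < r") (auto simp: v0 intro: ms.span_base ms.span_zero)
  qed
  have "r \<le> ms.dim (v ` {..<r})"
    using ms_dim_le_if_subset_span[OF _ span] dim by (simp add: span_dim_eq_dim)
  moreover have "ms.dim (v ` {..<r}) \<le> card (v ` {..<r})"
    by (rule ms.dim_le_card') simp
  moreover have "card (v ` {..<r}) \<le> r"
    using card_image_le[of "{..<r}" v] by simp
  ultimately have card: "card (v ` {..<r}) = card {..<r}" and "ms.dim (v ` {..<r}) = card (v ` {..<r})"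
    by auto
  then have inj: "inj_on v {..<r}" and indep: "ms.independent (v ` {..<r})"
    by (simp_all add: eq_card_imp_inj_on ms_independent_if_dim_eq_card)
  show ?thesis
    unfolding zero_upper_right_block_def
  proof (intro allI impI)
    fix i i'
    assume i: "i < r" and i': "r \<le> i'" "i' < m"
    have "(\<Sum>i<m. mscale (R $$ (i, i')) (v i)) = 0"
      using CR0[OF i'] unfolding v_def slice1_mode1_prod[symmetric] by (auto simp: fun_eq_iff)
    moreover have "(\<Sum>i<m. mscale (R $$ (i, i')) (v i)) = (\<Sum>i<r. mscale (R $$ (i, i')) (v i))"
      using r by (intro sum.mono_neutral_right) (auto simp: v0 mscale_def fun_eq_iff)
    ultimately show "R $$ (i, i') = 0"
      using ms_independent_family_coeff_zero[OF _ inj indep] i by simp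
  qed
qed

lemma sum_lessThan_if_less:
  fixes g :: "nat \<Rightarrow> 'b::comm_monoid_add"
  assumes "r \<le> m"
  shows "(\<Sum>i<m. if i < r then g i else 0) = (\<Sum>i<r. g i)"
proof -
  have "{i \<in> {..<m}. i < r} = {..<r}"
    using assms by auto
  then show ?thesis
    by (metis (no_types) finite_lessThan sum.inter_filter)
qed

lemma smat_transform_sdsum_zero:
  assumes "r1 \<le> m" "r2 \<le> n" "r3 \<le> q"
  shows "smat_transform m n q (sdsum_zero r1 r2 r3 A) R S T i' j' k' =
    (\<Sum>i<r1. \<Sum>j<r2. \<Sum>k<r3. A i j k * R $$ (i, i') * S $$ (j, j') * T $$ (k, k'))"
proof -
  have "sdsum_zero r1 r2 r3 A i j k * R $$ (i, i') * S $$ (j, j') * T $$ (k, k') =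
      (if i < r1 then if j < r2 then if k < r3
       then A i j k * R $$ (i, i') * S $$ (j, j') * T $$ (k, k') else 0 else 0 else 0)" for i j k
    by (simp add: sdsum_zero_def)
  moreover have "(\<Sum>k\<in>K. if P then g k else 0) = (if P then sum g K else 0)"
    for P and g :: "nat \<Rightarrow> 'a" and K
    by simp
  ultimately show ?thesis
    using assms by (simp add: smat_transform_apply sum_lessThan_if_less)
qed

lemma rotate_smat_sdsum_zero: "rotate_smat (sdsum_zero r1 r2 r3 A) = sdsum_zero r2 r3 r1 (rotate_smat A)"
  by (auto simp: rotate_smat_def sdsum_zero_def fun_eq_iff)

lemma sdsum_zero_transform_zero_upper_right_block:
  fixes A' B' :: "'a::field smat"
  assumes r1: "r1 \<le> m"
    and S: "S \<in> carrier_mat n n" "invertible_mat S"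
    and T: "T \<in> carrier_mat q q" "invertible_mat T"
    and dim: "span_dim (slices1 m n q (sdsum_zero r1 r2 r3 A')) = r1"
    and eq: "box_eq m n q (sdsum_zero r1 r2 r3 B') (smat_transform m n q (sdsum_zero r1 r2 r3 A') R S T)"
  shows "zero_upper_right_block r1 m R"
proof -
  define C where "C = mode2_prod n (mode3_prod q (sdsum_zero r1 r2 r3 A') T) S"
  have equiv: "sequiv m n q (sdsum_zero r1 r2 r3 A') C"
    unfolding sequiv_iff_box_eq smat_transform_def C_def
    using S T by (intro exI[of _ "1\<^sub>m m"] exI[of _ S] exI[of _ T])
      (simp add: invertible_mat_one box_eq_sym[OF mode1_prod_one])
  have "span_dim (slices1 m n q C) = r1"
    using span_dim_slices1_sequiv[OF equiv] dim by simp
  moreover have "C i j k = 0" if "r1 \<le> i" for i j k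
    using that by (simp add: C_def mode2_prod_def mode3_prod_def sdsum_zero_def)
  moreover have "mode1_prod m C R i j k = 0" if "r1 \<le> i" "i < m" "j < n" "k < q" for i j k
  proof -
    have "mode1_prod m C R i j k = sdsum_zero r1 r2 r3 B' i j k"
      using eq that by (simp add: box_eq_def C_def smat_transform_def)
    then show ?thesis
      using that by (simp add: sdsum_zero_def)
  qed
  ultimately show ?thesis
    using mode1_prod_zero_upper_right_block[OF r1] by blast
qed

lemma sdsum_zero_transform_zero_upper_right_blocks:
  fixes A' B' :: "'a::field smat"
  assumes r: "r1 \<le> m" "r2 \<le> n" "r3 \<le> q"
    and R: "R \<in> carrier_mat m m" "invertible_mat R"
    and S: "S \<in> carrier_mat n n" "invertible_mat S"
    and T: "T \<in> carrier_mat q q" "invertible_mat T"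
    and rank: "srank m n q (sdsum_zero r1 r2 r3 A') = (r1, r2, r3)"
    and eq: "box_eq m n q (sdsum_zero r1 r2 r3 B') (smat_transform m n q (sdsum_zero r1 r2 r3 A') R S T)"
  shows "zero_upper_right_block r1 m R" "zero_upper_right_block r2 n S"
    "zero_upper_right_block r3 q T"
proof -
  show "zero_upper_right_block r1 m R"
    using sdsum_zero_transform_zero_upper_right_block[OF r(1) S T _ eq] rank
    by (simp add: srank_def)
  have rank2: "srank n q m (sdsum_zero r2 r3 r1 (rotate_smat A')) = (r2, r3, r1)"
    using srank_rotate_smat[of n q m "sdsum_zero r1 r2 r3 A'"] rank
    by (simp add: rotate_smat_sdsum_zero)
  have eq2: "box_eq n q m (sdsum_zero r2 r3 r1 (rotate_smat B'))
      (smat_transform n q m (sdsum_zero r2 r3 r1 (rotate_smat A')) S T R)"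
    using box_eq_rotate_smat[OF eq] by (simp add: rotate_smat_transform rotate_smat_sdsum_zero)
  show "zero_upper_right_block r2 n S"
    using sdsum_zero_transform_zero_upper_right_block[OF r(2) T R _ eq2] rank2
    by (simp add: srank_def)
  have rank3: "srank q m n (sdsum_zero r3 r1 r2 (rotate_smat (rotate_smat A'))) = (r3, r1, r2)"
    using srank_rotate_smat[of q m n "sdsum_zero r2 r3 r1 (rotate_smat A')"] rank2
    by (simp add: rotate_smat_sdsum_zero)
  have eq3: "box_eq q m n (sdsum_zero r3 r1 r2 (rotate_smat (rotate_smat B')))
      (smat_transform q m n (sdsum_zero r3 r1 r2 (rotate_smat (rotate_smat A'))) T R S)"
    using box_eq_rotate_smat[OF eq2] by (simp add: rotate_smat_transform rotate_smat_sdsum_zero)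
  show "zero_upper_right_block r3 q T"
    using sdsum_zero_transform_zero_upper_right_block[OF r(3) R S _ eq3] rank3
    by (simp add: srank_def)
qed

lemma sequiv_of_sequiv_sdsum_zero:
  fixes A' B' :: "'a::field smat"
  assumes r: "r1 \<le> m" "r2 \<le> n" "r3 \<le> q"
    and rank: "srank m n q (sdsum_zero r1 r2 r3 A') = (r1, r2, r3)"
    and equiv: "sequiv m n q (sdsum_zero r1 r2 r3 A') (sdsum_zero r1 r2 r3 B')"
  shows "sequiv r1 r2 r3 A' B'"
proof -
  obtain R S T where R: "R \<in> carrier_mat m m" "invertible_mat R"
    and S: "S \<in> carrier_mat n n" "invertible_mat S"
    and T: "T \<in> carrier_mat q q" "invertible_mat T"
    and eq: "box_eq m n q (sdsum_zero r1 r2 r3 B') (smat_transform m n q (sdsum_zero r1 r2 r3 A') R S T)"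
    using equiv unfolding sequiv_iff_box_eq by blast
  note blocks = sdsum_zero_transform_zero_upper_right_blocks[OF r R S T rank eq]
  have "B' i' j' k' = smat_transform r1 r2 r3 A'
      (upper_left_block r1 R) (upper_left_block r2 S) (upper_left_block r3 T) i' j' k'"
    if i': "i' < r1" "j' < r2" "k' < r3" for i' j' k'
  proof -
    have "B' i' j' k' = sdsum_zero r1 r2 r3 B' i' j' k'"
      using i' by (simp add: sdsum_zero_def)
    also have "\<dots> = smat_transform m n q (sdsum_zero r1 r2 r3 A') R S T i' j' k'"
      using eq r i' by (simp add: box_eq_def)
    also have "\<dots> = (\<Sum>i<r1. \<Sum>j<r2. \<Sum>k<r3. A' i j k * R $$ (i, i') * S $$ (j, j') * T $$ (k, k'))"
      by (rule smat_transform_sdsum_zero[OF r])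
    also have "\<dots> = smat_transform r1 r2 r3 A'
        (upper_left_block r1 R) (upper_left_block r2 S) (upper_left_block r3 T) i' j' k'"
      using i' by (simp add: smat_transform_apply upper_left_block_def)
    finally show ?thesis .
  qed
  moreover have "upper_left_block r1 R \<in> carrier_mat r1 r1" "upper_left_block r2 S \<in> carrier_mat r2 r2"
    "upper_left_block r3 T \<in> carrier_mat r3 r3"
    by (simp_all add: upper_left_block_def)
  moreover have "invertible_mat (upper_left_block r1 R)" "invertible_mat (upper_left_block r2 S)"
    "invertible_mat (upper_left_block r3 T)"
    using invertible_upper_left_block R S T r blocks by blast+
  ultimately show ?thesis
    unfolding sequiv_iff_box_eq box_eq_def by blast
qed

lemma sequiv_sdsum_zero:
  fixes A' B' :: "'a::field smat"
  assumes r: "r1 \<le> m" "r2 \<le> n" "r3 \<le> q" and equiv: "sequiv r1 r2 r3 A' B'"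
  shows "sequiv m n q (sdsum_zero r1 r2 r3 A') (sdsum_zero r1 r2 r3 B')"
proof -
  obtain R S T where R: "R \<in> carrier_mat r1 r1" "invertible_mat R"
    and S: "S \<in> carrier_mat r2 r2" "invertible_mat S"
    and T: "T \<in> carrier_mat r3 r3" "invertible_mat T"
    and eq: "box_eq r1 r2 r3 B' (smat_transform r1 r2 r3 A' R S T)"
    using equiv unfolding sequiv_iff_box_eq by blast
  let ?R = "extend_with_identity m R" and ?S = "extend_with_identity n S" and ?T = "extend_with_identity q T"
  have "box_eq m n q (sdsum_zero r1 r2 r3 B') (smat_transform m n q (sdsum_zero r1 r2 r3 A') ?R ?S ?T)"
    unfolding box_eq_def
  proof (intro allI impI)
    fix i' j' k'
    assume i': "i' < m" "j' < n" "k' < q"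
    have "smat_transform m n q (sdsum_zero r1 r2 r3 A') ?R ?S ?T i' j' k' =
        (\<Sum>i<r1. \<Sum>j<r2. \<Sum>k<r3. A' i j k * ?R $$ (i, i') * ?S $$ (j, j') * ?T $$ (k, k'))"
      by (rule smat_transform_sdsum_zero[OF r])
    also have "\<dots> =
        (if i' < r1 \<and> j' < r2 \<and> k' < r3 then smat_transform r1 r2 r3 A' R S T i' j' k' else 0)"
      using r R S T i' by (auto simp: smat_transform_apply index_extend_with_identity)
    finally show "sdsum_zero r1 r2 r3 B' i' j' k' = smat_transform m n q (sdsum_zero r1 r2 r3 A') ?R ?S ?T i' j' k'"
      using eq by (simp add: box_eq_def sdsum_zero_def)
  qed
  then show ?thesis
    unfolding sequiv_iff_box_eq
    using R S T r by (meson extend_with_identity_carrier invertible_extend_with_identity)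
qed

lemma span_dim_image_lessThan_le: "span_dim (f ` {..<m}) \<le> m"
  unfolding span_dim_eq_dim
  using ms.dim_le_card'[of "f ` {..<m}"] card_image_le[of "{..<m}" f] by simp

lemma srank_le_dims: "srank m n q A = (r1, r2, r3) \<Longrightarrow> r1 \<le> m \<and> r2 \<le> n \<and> r3 \<le> q"
  unfolding srank_def slices1_def slices2_def slices3_def
  using span_dim_image_lessThan_le by blast

theorem lemma4p2:
  fixes A B A' B' :: "'a::field smat"
  assumes "regular_part m n q A r1 r2 r3 A'"
      and "regular_part m n q B s1 s2 s3 B'"
  shows "sequiv m n q A B \<longleftrightarrow> ((r1, r2, r3) = (s1, s2, s3) \<and> sequiv r1 r2 r3 A' B')"
proof -
  have rankA: "srank m n q A = (r1, r2, r3)" and A: "sequiv m n q A (sdsum_zero r1 r2 r3 A')"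
    and rankB: "srank m n q B = (s1, s2, s3)" and B: "sequiv m n q B (sdsum_zero s1 s2 s3 B')"
    using assms unfolding regular_part_def by auto
  have r: "r1 \<le> m" "r2 \<le> n" "r3 \<le> q"
    using srank_le_dims[OF rankA] by auto
  have rank: "srank m n q (sdsum_zero r1 r2 r3 A') = (r1, r2, r3)"
    using srank_sequiv[OF A] rankA by simp
  show ?thesis
  proof
    assume AB: "sequiv m n q A B"
    have same: "(r1, r2, r3) = (s1, s2, s3)"
      using srank_sequiv[OF AB] rankA rankB by simp
    then have "sequiv m n q (sdsum_zero r1 r2 r3 A') (sdsum_zero r1 r2 r3 B')"
      using sequiv_trans[OF sequiv_trans[OF sequiv_sym[OF A] AB] B] by simp
    then show "(r1, r2, r3) = (s1, s2, s3) \<and> sequiv r1 r2 r3 A' B'"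
      using same sequiv_of_sequiv_sdsum_zero[OF r rank] by blast
  next
    assume "(r1, r2, r3) = (s1, s2, s3) \<and> sequiv r1 r2 r3 A' B'"
    then have "sequiv m n q (sdsum_zero r1 r2 r3 A') (sdsum_zero s1 s2 s3 B')"
      using sequiv_sdsum_zero[OF r] by auto
    then show "sequiv m n q A B"
      by (rule sequiv_trans[OF sequiv_trans[OF A] sequiv_sym[OF B]])
  qed
qed

end
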